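(* Let $A\in\mathbb{R}^{n\times n}$ and $C_i\in\mathbb{R}^{m_i\times n}$, $i\in\mathcal{N}=\{1,\dots,N\}$, and let $q\ge 0$ be an integer. Assume: (i) ($2q$-redundant observability) for every $\mathcal{N}'\subset\mathcal{N}$ with $|\mathcal{N}'|=N-2q$, the pair $(C',A)$ is observable, where $C'$ is the matrix obtained by stacking the $C_i$, $i\in\mathcal{N}'$; (ii) there exists a basis $\{v_1,\dots,v_n\}$ of $\mathbb{R}^n$ such that, for every $i\in\mathcal{N}$, the unobservable subspace $\mathcal{U}_i$ of the pair $(C_i,A)$ is the span of a subset of $\{v_1,\dots,v_n\}$. For such a basis define, for $i\in\mathcal{N}$ and $l\in\{1,\dots,n\}$, $s_i^l=1$ if $v_l\notin\mathcal{U}_i$ and $s_i^l=0$ if $v_l\in\mathcal{U}_i$. Then, for each $l=1,\dots,n$, $$|\{ i \in \mathcal{N} : s_i^l = 1 \}| \ge 2q+1.$$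
   Context: $\mathcal{U}_i$ denotes the unobservable subspace of $(C_i,A)$, i.e., the kernel of the observability matrix $\mathrm{col}(C_i, C_iA,\dots,C_iA^{n-1})$. $|\cdot|$ denotes cardinality. *)

theory Defs
  imports "HOL-Analysis.Analysis"
begin

text \<open>An output matrix C with m rows is represented by the list of its m row vectors.
  The unobservable subspace of (C, A) is the kernel of the observability matrix
  col(C, C A, ..., C A^(n-1)), n = CARD('n): the vectors x with r . (A^k x) = 0
  for every row r of C and every k < n.\<close>

definition unobs_sub :: "real^'n^'n \<Rightarrow> (real^'n) list \<Rightarrow> (real^'n) set" where
  "unobs_sub A C = {x. \<forall>r\<in>set C. \<forall>k<CARD('n). r \<bullet> (((\<lambda>y. A *v y) ^^ k) x) = 0}"

definition observable :: "real^'n^'n \<Rightarrow> (real^'n) list \<Rightarrow> bool" where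
  "observable A C \<longleftrightarrow> unobs_sub A C = {0}"

definition stack :: "(nat \<Rightarrow> (real^'n) list) \<Rightarrow> nat set \<Rightarrow> (real^'n) list" where
  "stack C S = concat (map C (sorted_list_of_set S))"

end

theory Submission
  imports Defs
begin

text \<open>If a nonzero vector x were detected by at most k of the
  sensors, the others would contain a set of size card I - k whose stack is blind to x,
  contradicting k-redundant observability. Basis vectors are nonzero, so each is detected by
  more than k sensors.\<close>

lemma set_stack: "finite S \<Longrightarrow> set (stack C S) = (\<Union>i\<in>S. set (C i))"
  by (simp add: stack_def)

lemma unobs_sub_stack:
  assumes "finite S"
  shows "unobs_sub A (stack C S) = (\<Inter>i\<in>S. unobs_sub A (C i))"
  by (auto simp: unobs_sub_def set_stack[OF assms])

lemma redundant_observable_imp_card_detecting_gt: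
  fixes A :: "real^'n^'n" and C :: "nat \<Rightarrow> (real^'n) list"
  assumes I: "finite I"
    and red_obs: "\<And>J. J \<subseteq> I \<Longrightarrow> card J = card I - k \<Longrightarrow> observable A (stack C J)"
    and "x \<noteq> 0"
  shows "k < card {i\<in>I. x \<notin> unobs_sub A (C i)}"
proof (rule ccontr)
  define S where "S = {i\<in>I. x \<notin> unobs_sub A (C i)}"
  assume "\<not> k < card {i\<in>I. x \<notin> unobs_sub A (C i)}"
  then have "card S \<le> k" by (simp add: S_def)
  moreover have "S \<subseteq> I" by (auto simp: S_def)
  then have "card (I - S) = card I - card S"
    using I by (meson card_Diff_subset finite_subset)
  ultimately have "card I - k \<le> card (I - S)" by linarith
  then obtain J where J: "J \<subseteq> I - S" "card J = card I - k"
    by (meson obtain_subset_with_card_n)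
  have "finite J" using J(1) I finite_subset by blast
  moreover have "x \<in> unobs_sub A (C i)" if "i \<in> J" for i
    using J(1) that unfolding S_def by blast
  ultimately have "x \<in> unobs_sub A (stack C J)"
    by (simp add: unobs_sub_stack)
  moreover have "observable A (stack C J)" using J red_obs by blast
  ultimately show False using \<open>x \<noteq> 0\<close> by (simp add: observable_def)
qed

theorem lemma1:
  fixes A :: "real^'n^'n"
    and C :: "nat \<Rightarrow> (real^'n) list"
    and N q :: nat
    and v :: "nat \<Rightarrow> real^'n"
  assumes Nq: "2 * q \<le> N"
    and red_obs: "\<And>N'. N' \<subseteq> {1..N} \<Longrightarrow> card N' = N - 2 * q \<Longrightarrow> observable A (stack C N')"
    and basis_inj: "inj_on v {1..CARD('n)}"
    and basis_indep: "independent (v ` {1..CARD('n)})"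
    and basis_span: "span (v ` {1..CARD('n)}) = UNIV"
    and unobs_span: "\<forall>i\<in>{1..N}. \<exists>L\<subseteq>{1..CARD('n)}. unobs_sub A (C i) = span (v ` L)"
  shows "\<forall>l\<in>{1..CARD('n)}. card {i\<in>{1..N}. v l \<notin> unobs_sub A (C i)} \<ge> 2 * q + 1"
proof
  fix l assume "l \<in> {1..CARD('n)}"
  then have "v l \<in> v ` {1..CARD('n)}" by (rule imageI)
  have "v l \<noteq> 0"
  proof
    assume "v l = 0"
    with \<open>v l \<in> v ` {1..CARD('n)}\<close> have "0 \<in> v ` {1..CARD('n)}" by simp
    then show False using basis_indep dependent_zero by blast
  qed
  have "2 * q < card {i\<in>{1..N}. v l \<notin> unobs_sub A (C i)}"
  proof (rule redundant_observable_imp_card_detecting_gt)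
    show "finite {1..N}" by simp
    show "observable A (stack C J)" if "J \<subseteq> {1..N}" "card J = card {1..N} - 2 * q" for J
      using red_obs that by simp
    show "v l \<noteq> 0" by fact
  qed
  then show "card {i\<in>{1..N}. v l \<notin> unobs_sub A (C i)} \<ge> 2 * q + 1" by simp
qed

end
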